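(* Let $p$ be a prime and $n\ge 2$ an integer. Then, modulo $p$, \[ \sum_{j=1}^{p-1}\zeta_{n,2}(jx,x)\equiv\begin{cases}-x^n=-\zeta_{n,1}(x) & \text{if } n=p^i \text{ for some } i\ge1,\\ 0&\text{otherwise.}\end{cases} \]
   Context: For integers $n,k\ge1$, $\zeta_{n,k}(x_1,\dots,x_k)=\phi(n,k)^{-1}\sum_{\lambda}\frac{n!}{\lambda_1!\cdots\lambda_k!}x_1^{\lambda_1}\cdots x_k^{\lambda_k}$, the sum over $k$-tuples $\lambda$ of positive integers with sum $n$, and $\phi(n,k)=\gcd_\lambda\frac{n!}{\lambda_1!\cdots\lambda_k!}$ over the same tuples; this is an integral polynomial. In particular $\zeta_{n,2}(x,y)=\phi(n,2)^{-1}\big((x+y)^n-x^n-y^n\big)$ and $\zeta_{n,1}(x)=x^n$. The sum $\sum_{j}\zeta_{n,2}(jx,x)$ is the additive half-Weil form associated to $\zeta_{n,2}$. *)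

theory Defs
  imports "HOL-Computational_Algebra.Polynomial" "HOL-Number_Theory.Cong"
begin

definition phi2 :: "nat \<Rightarrow> nat" where
  "phi2 n = Gcd {fact n div (fact l1 * fact l2) | l1 l2. l1 \<ge> 1 \<and> l2 \<ge> 1 \<and> l1 + l2 = n}"

definition zeta2 :: "nat \<Rightarrow> 'a::comm_ring_1 \<Rightarrow> 'a \<Rightarrow> 'a" where
  "zeta2 n a b = (\<Sum>l1\<in>{1..<n}.
      of_nat ((fact n div (fact l1 * fact (n - l1))) div phi2 n) * a ^ l1 * b ^ (n - l1))"

definition zeta1 :: "nat \<Rightarrow> 'a::comm_ring_1 \<Rightarrow> 'a" where
  "zeta1 n a = a ^ n"

definition poly_cong :: "int poly \<Rightarrow> int poly \<Rightarrow> int \<Rightarrow> bool" where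
  "poly_cong f g m \<longleftrightarrow> (\<forall>k. [coeff f k = coeff g k] (mod m))"

end

theory Submission
  imports Defs "HOL-Algebra.Exponent"
begin

text \<open>Multiplying by phi(n,2) clears the denominators: phi(n,2) zeta(jx,x) = ((j+1)^n - j^n - 1) x^n,
  and the sum over j = 1..p-1 telescopes, so the half-Weil form is c x^n with phi(n,2) c = p^n - p.
  Since p divides binomial(p^a m, p^a) exactly as often as it divides m, phi(n,2) = p when n is a
  power of p, whence c = p^(n-1) - 1 = -1 mod p; otherwise p does not divide phi(n,2), whence p divides c.\<close>

lemma phi2_eq_Gcd_binomial: "phi2 n = Gcd ((\<lambda>l. n choose l) ` {1..<n})"
proof -
  have "{fact n div (fact l1 * fact l2) | l1 l2. l1 \<ge> 1 \<and> l2 \<ge> 1 \<and> l1 + l2 = n}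
        = (\<lambda>l. n choose l) ` {1..<n}"
    by (force simp: binomial_fact' intro: image_eqI)
  then show ?thesis by (simp add: phi2_def)
qed

lemma phi2_dvd_binomial: "0 < l \<Longrightarrow> l < n \<Longrightarrow> phi2 n dvd (n choose l)"
  by (simp add: phi2_eq_Gcd_binomial Gcd_dvd)

lemma dvd_phi2I: "(\<And>l. 0 < l \<Longrightarrow> l < n \<Longrightarrow> d dvd (n choose l)) \<Longrightarrow> d dvd phi2 n"
  by (auto simp: phi2_eq_Gcd_binomial intro: Gcd_greatest)

lemma phi2_dvd_self: "2 \<le> n \<Longrightarrow> phi2 n dvd n"
  using phi2_dvd_binomial[of 1 n] by simp

lemma phi2_pos: "2 \<le> n \<Longrightarrow> 0 < phi2 n"
  using phi2_dvd_self by (fastforce intro: gr0I)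

lemma phi2_mult_zeta2:
  fixes a b :: "'a::comm_ring_1"
  assumes "1 \<le> n"
  shows "of_nat (phi2 n) * zeta2 n a b = (a + b) ^ n - a ^ n - b ^ n"
proof -
  have "of_nat (phi2 n) * zeta2 n a b = (\<Sum>l\<in>{1..<n}. of_nat (n choose l) * a ^ l * b ^ (n - l))"
    unfolding zeta2_def sum_distrib_left
  proof (intro sum.cong refl)
    fix l assume "l \<in> {1..<n}"
    then have "phi2 n * ((n choose l) div phi2 n) = n choose l"
      using phi2_dvd_binomial by simp
    then show "of_nat (phi2 n) * (of_nat (fact n div (fact l * fact (n - l)) div phi2 n) * a ^ l * b ^ (n - l))
             = of_nat (n choose l) * a ^ l * b ^ (n - l)"
      using \<open>l \<in> {1..<n}\<close> by (simp add: binomial_fact' flip: of_nat_mult mult.assoc)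
  qed
  also have "\<dots> = (a + b) ^ n - a ^ n - b ^ n"
  proof -
    have "{..n} = insert 0 (insert n {1..<n})" using assms by auto
    then show ?thesis using assms by (simp add: binomial_ring[of a b n])
  qed
  finally show ?thesis .
qed

lemma sum_consecutive_power_differences:
  "(\<Sum>j=1..m. (of_nat j + 1) ^ n - of_nat j ^ n - 1 :: 'a::comm_ring_1) = (of_nat m + 1) ^ n - of_nat m - 1"
proof -
  have "(\<Sum>j=1..m. (of_nat j + 1) ^ n - of_nat j ^ n - 1 :: 'a) = (\<Sum>j=1..m. of_nat (Suc j) ^ n - of_nat j ^ n) - of_nat m"
    by (simp add: sum_subtractf add.commute)
  also have "\<dots> = (of_nat m + 1) ^ n - of_nat m - 1"
    by (subst sum_Suc_diff) (simp_all add: add.commute)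
  finally show ?thesis .
qed

lemma prime_dvd_binomial_prime_power:
  assumes p: "prime p" and l: "0 < l" "l < p ^ i"
  shows "p dvd (p ^ i choose l)"
proof (rule ccontr)
  assume "\<not> p dvd (p ^ i choose l)"
  then have "coprime (p ^ i) (p ^ i choose l)"
    using p by (simp add: prime_imp_coprime coprime_commute)
  moreover have "p ^ i dvd l * (p ^ i choose l)"
    using l by (simp add: times_binomial_minus1_eq)
  ultimately have "p ^ i dvd l"
    using coprime_dvd_mult_left_iff by blast
  then show False
    using l by (simp add: nat_dvd_not_less)
qed

lemma phi2_prime_power:
  assumes p: "prime p" and i: "1 \<le> i"
  shows "phi2 (p ^ i) = p"
proof -
  obtain a where i_eq: "i = Suc a" using i by (cases i) auto
  have p1: "1 < p" using p by (rule prime_gt_1_nat)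
  have "2 \<le> p ^ i"
    using prime_ge_2_nat[OF p] self_le_power[of p i] i by simp
  then obtain k where k: "phi2 (p ^ i) = p ^ k"
    using phi2_dvd_self divides_primepow_nat[OF p] by blast
  have "p dvd phi2 (p ^ i)"
    using prime_dvd_binomial_prime_power[OF p] by (rule dvd_phi2I)
  then have "k \<noteq> 0"
    using k p1 by (intro notI) simp
  moreover have "\<not> p ^ 2 dvd phi2 (p ^ i)"
  proof
    assume "p ^ 2 dvd phi2 (p ^ i)"
    moreover have "phi2 (p ^ i) dvd (p ^ a * p choose p ^ a)"
      using phi2_dvd_binomial[of "p ^ a" "p ^ i"] p1 by (simp add: i_eq mult.commute)
    ultimately have "p ^ 2 dvd (p ^ a * p choose p ^ a)"
      by (rule dvd_trans)
    moreover have "multiplicity p (p ^ a * p choose p ^ a) = 1"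
      using const_p_fac[of p p a] p p1 by (simp add: multiplicity_prime)
    moreover have "p ^ a * p choose p ^ a \<noteq> 0"
      using p1 by simp
    ultimately show False
      using p1 by (simp add: power_dvd_iff_le_multiplicity)
  qed
  then have "k < 2"
    using k le_imp_power_dvd[of 2 k p] by fastforce
  ultimately show ?thesis
    using k by (simp add: less_2_cases_iff)
qed

lemma prime_power_if_prime_dvd_phi2:
  assumes p: "prime p" and n: "2 \<le> n" and dvd: "p dvd phi2 n"
  shows "\<exists>i\<ge>1. n = p ^ i"
proof -
  define a where "a = multiplicity p n"
  obtain m where m: "n = p ^ a * m" "\<not> p dvd m"
    using multiplicity_decompose'[of n p] n prime_gt_1_nat[OF p] unfolding a_def by force
  have "m = 1"
  proof (rule ccontr)
    assume "m \<noteq> 1"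
    moreover have "m \<noteq> 0" using m n by (intro notI) simp
    ultimately have "p ^ a < n"
      using m prime_gt_1_nat[OF p] by simp
    then have "p dvd (p ^ a * m choose p ^ a)"
      using dvd phi2_dvd_binomial[of "p ^ a" n] m p by (simp add: dvd_trans)
    moreover have "multiplicity p (p ^ a * m choose p ^ a) = 0"
      using const_p_fac[of m p a] \<open>m \<noteq> 0\<close> m p by (simp add: not_dvd_imp_multiplicity_0)
    ultimately show False
      using \<open>m \<noteq> 0\<close> p by (simp add: prime_multiplicity_gt_zero_iff[symmetric])
  qed
  with m have "n = p ^ a" by simp
  moreover from this n have "a \<noteq> 0" by (intro notI) simp
  ultimately show ?thesis by (intro exI[of _ a]) simp
qed

lemma phi2_mult_sum_zeta2_monomials:
  assumes "1 \<le> n"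
  shows "of_nat (phi2 n) * (\<Sum>j=1..m. zeta2 n (smult (of_nat j) [:0, 1:]) [:0, 1:])
       = monom ((of_nat m + 1) ^ n - of_nat m - 1 :: 'a::comm_ring_1) n"
proof -
  have "of_nat (phi2 n) * (\<Sum>j=1..m. zeta2 n (smult (of_nat j) [:0, 1:]) [:0, 1:])
      = (\<Sum>j=1..m. of_nat (phi2 n) * zeta2 n (of_nat j * [:0, 1:]) [:0, 1::'a:])"
    by (simp add: sum_distrib_left of_nat_poly)
  also have "\<dots> = (\<Sum>j=1..m. (of_nat j * [:0, 1:] + [:0, 1:]) ^ n - (of_nat j * [:0, 1:]) ^ n - [:0, 1::'a:] ^ n)"
    by (simp only: phi2_mult_zeta2[OF assms])
  also have "\<dots> = (\<Sum>j=1..m. (of_nat j + 1) ^ n - of_nat j ^ n - 1) * [:0, 1:] ^ n"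
  proof -
    have "(c * x + x) ^ n - (c * x) ^ n - x ^ n = ((c + 1) ^ n - c ^ n - 1) * x ^ n" for c x :: "'a poly"
    proof -
      have "(c * x + x) ^ n = (c + 1) ^ n * x ^ n"
        by (simp add: distrib_right flip: power_mult_distrib)
      then show ?thesis by (simp add: left_diff_distrib power_mult_distrib)
    qed
    then show ?thesis by (simp only: sum_distrib_right)
  qed
  also have "\<dots> = monom ((of_nat m + 1) ^ n - of_nat m - 1) n"
    unfolding sum_consecutive_power_differences by (simp add: monom_altdef of_nat_poly one_pCons poly_const_pow)
  finally show ?thesis .
qed

lemma cong_quotient_by_phi2:
  fixes c :: int
  assumes p: "prime p" and n: "2 \<le> n" and c: "int (phi2 n) * c = int p ^ n - int p"
  shows "[c = (if \<exists>i\<ge>1. n = p ^ i then -1 else 0)] (mod int p)"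
proof -
  have factor_p: "int p ^ n - int p = int p * (int p ^ (n - 1) - 1)"
    using n by (simp add: algebra_simps power_eq_if)
  show ?thesis
  proof (cases "\<exists>i\<ge>1. n = p ^ i")
    case True
    then have "phi2 n = p" using phi2_prime_power[OF p] by auto
    then have "c = int p ^ (n - 1) - 1"
      using c factor_p prime_gt_0_nat[OF p] by simp
    then show ?thesis
      using True n by (simp add: cong_iff_dvd_diff)
  next
    case False
    then have "\<not> p dvd phi2 n"
      using prime_power_if_prime_dvd_phi2[OF p n] by blast
    then have "coprime (int p) (int (phi2 n))"
      using p by (simp add: prime_imp_coprime)
    moreover have "int p dvd int (phi2 n) * c"
      using c factor_p by simp
    ultimately have "int p dvd c"
      by (simp add: coprime_dvd_mult_right_iff)
    then show ?thesis
      unfolding if_not_P[OF False] by (simp add: cong_0_iff)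
  qed
qed

theorem mainTheorem9:
  fixes p n :: nat
  assumes "prime p" and "n \<ge> 2"
  shows "poly_cong (\<Sum>j=1..p-1. zeta2 n (smult (of_nat j) [:0, 1:]) [:0, 1::int:])
           (if (\<exists>i\<ge>1. n = p ^ i) then - zeta1 n [:0, 1:] else 0) (int p)"
proof -
  define S where "S = (\<Sum>j=1..p-1. zeta2 n (smult (of_nat j) [:0, 1:]) [:0, 1::int:])"
  have scaled_S: "of_nat (phi2 n) * S = monom (int p ^ n - int p) n"
    using phi2_mult_sum_zeta2_monomials[of n "p - 1"] assms prime_gt_0_nat[OF assms(1)]
    by (simp add: S_def of_nat_diff)
  have coeff_S: "int (phi2 n) * coeff S k = (if n = k then int p ^ n - int p else 0)" for k
    using arg_cong[OF scaled_S, of "\<lambda>q. coeff q k"] by (simp add: of_nat_poly coeff_monom)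
  have coeff_rhs: "coeff (if P then - zeta1 n [:0, 1::int:] else 0) k
      = (if k = n then (if P then -1 else 0) else 0)" for P k
    by (simp add: zeta1_def monom_altdef[of 1, simplified, symmetric] coeff_monom)
  show ?thesis
    unfolding poly_cong_def S_def[symmetric] coeff_rhs
  proof
    fix k
    show "[coeff S k = (if k = n then (if \<exists>i\<ge>1. n = p ^ i then -1 else 0) else 0)] (mod int p)"
      using cong_quotient_by_phi2[OF assms, of "coeff S n"] coeff_S[of k] coeff_S[of n] phi2_pos[OF assms(2)]
      by auto
  qed
qed

end
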